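(* Let $(\mathbb{X},\mathcal{X})$ be a Polish space, $G_0$ a probability measure on $\mathbb{X}^2$ with marginals $G_{01},G_{02}$, and $\alpha_1,\alpha_2>0$. Let $G_i=\sum_{k\ge1}W_{ik}\delta_{\tilde\varphi_{ik}}$, $i=1,2$, where $(\tilde\varphi_{1k},\tilde\varphi_{2k})_{k\ge1}$ are i.i.d. with law $G_0$, independent of the weights, and $W_{ik}=S_{ik}\prod_{j<k}(1-S_{ij})$ with $(S_{1k},S_{2k})_{k\ge1}$ i.i.d. random vectors distributed as $(S_{11},S_{21})$. (a) If $(S_{11},S_{21})=(V_0V_1,V_0V_2)$ with $V_0,V_1,V_2$ independent, $V_0\sim Beta(1+\alpha_1,\alpha_2)$ and $V_1,V_2\sim Beta(1,\alpha_1)$, then $G_1$ and $G_2$ are (marginally) Dirichlet processes with the same precision parameter $\alpha_1+\alpha_2$ and base measures $G_{01}$ and $G_{02}$ respectively. (b) If $(S_{11},S_{21})=(V_0V_1,V_0)$ with $V_0,V_1$ independent, $V_0\sim Beta(1,\alpha_1)$ and $V_1\sim Beta(1+\alpha_1,\alpha_2)$, then $G_1$ is a Dirichlet process with precision parameter $\alpha_1+\alpha_2$ and base measure $G_{01}$, and $G_2$ is a Dirichlet process with precision parameter $\alpha_1$ and base measure $G_{02}$.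
   Context: A Dirichlet process $DP(\alpha,H)$ with precision $\alpha>0$ and base probability measure $H$ on $\mathbb{X}$ is the law of the random measure $\sum_{k\ge1}W_k\delta_{\xi_k}$ where $(\xi_k)$ are i.i.d. with law $H$, independent of $(W_k)$, and $W_k=S_k\prod_{j<k}(1-S_j)$ with $(S_j)$ i.i.d. $Beta(1,\alpha)$ (Sethuraman's stick-breaking representation). $\delta_x$ is the Dirac mass at $x$. *)

theory Defs
  imports "HOL-Probability.Probability"
begin

definition beta_density :: "real \<Rightarrow> real \<Rightarrow> real \<Rightarrow> real" where
  "beta_density a b x =
     indicator {0<..<1} x * x powr (a - 1) * (1 - x) powr (b - 1) / Beta a b"

definition beta_measure :: "real \<Rightarrow> real \<Rightarrow> real measure" where
  "beta_measure a b = density lborel (\<lambda>x. ennreal (beta_density a b x))"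

text \<open>Stick-breaking weights W_k = S_k prod_{j<k} (1 - S_j) (indices start at 0).\<close>
definition stick_weights :: "(nat \<Rightarrow> real) \<Rightarrow> nat \<Rightarrow> real" where
  "stick_weights s k = s k * (\<Prod>j<k. (1 - s j))"

definition discrete_rm :: "(nat \<Rightarrow> real) \<Rightarrow> (nat \<Rightarrow> 'a::topological_space) \<Rightarrow> 'a measure" where
  "discrete_rm w \<xi> =
     measure_of UNIV (sets borel) (\<lambda>A. (\<Sum>k. ennreal (w k) * indicator A (\<xi> k)))"

text \<open>Dirichlet process DP(alpha,H) (Sethuraman): law, as a random element of the
  Giry space of (sub)probability measures on the Borel sets, of sum_k W_k delta_{xi_k}
  with xi_k iid ~ H independent of S_j iid ~ Beta(1,alpha).\<close>
definition DP :: "real \<Rightarrow> 'a::topological_space measure \<Rightarrow> 'a measure measure" where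
  "DP \<alpha> H =
     distr ((\<Pi>\<^sub>M k\<in>(UNIV::nat set). beta_measure 1 \<alpha>) \<Otimes>\<^sub>M (\<Pi>\<^sub>M k\<in>(UNIV::nat set). H))
           (subprob_algebra borel)
           (\<lambda>(s, \<xi>). discrete_rm (stick_weights s) \<xi>)"

end

theory Submission
  imports Defs
begin

text \<open>Each \<open>G\<^sub>i\<close> is a stick-breaking measure whose sticks \<open>S\<^sub>i\<^sub>k\<close> are i.i.d. and
  independent of its i.i.d. atoms with law \<open>G\<^sub>0\<^sub>i\<close>, so by Sethuraman's representation it is
  \<open>DP(c, G\<^sub>0\<^sub>i)\<close> as soon as \<open>S\<^sub>i\<^sub>1 \<sim> Beta(1, c)\<close>. Both parts therefore reduce to one
  computation: if \<open>V\<^sub>0 \<sim> Beta(1 + a\<^sub>1, a\<^sub>2)\<close> and \<open>V\<^sub>1 \<sim> Beta(1, a\<^sub>1)\<close> are independent,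
  then \<open>V\<^sub>0 V\<^sub>1 \<sim> Beta(1, a\<^sub>1 + a\<^sub>2)\<close>, because for \<open>0 \<le> t < 1\<close>
  \<open>P(V\<^sub>0 V\<^sub>1 > t) = E (1 - t / V\<^sub>0)\<^sub>+\<^bsup>a\<^sub>1\<^esup> = (1 - t)\<^bsup>a\<^sub>1 + a\<^sub>2\<^esup>\<close>
  after the substitution \<open>x = t + (1 - t) u\<close> in the Beta integral.\<close>

lemma borel_measurable_fst[measurable]:
  "fst \<in> borel_measurable (borel :: ('a::topological_space \<times> 'b::topological_space) measure)"
  by (intro borel_measurable_continuous_onI continuous_on_fst continuous_on_id)

lemma borel_measurable_snd[measurable]:
  "snd \<in> borel_measurable (borel :: ('a::topological_space \<times> 'b::topological_space) measure)"
  by (intro borel_measurable_continuous_onI continuous_on_snd continuous_on_id)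

section \<open>Products of Beta variables\<close>

lemma Beta_real_pos: "a > 0 \<Longrightarrow> b > 0 \<Longrightarrow> Beta a b > (0::real)"
  by (simp add: Beta_def)

lemma sets_beta_measure[simp, measurable_cong]: "sets (beta_measure a b) = sets borel"
  by (simp add: beta_measure_def)

lemma space_beta_measure[simp]: "space (beta_measure a b) = UNIV"
  by (simp add: beta_measure_def)

lemma borel_measurable_beta_density[measurable]: "beta_density a b \<in> borel_measurable borel"
  unfolding beta_density_def by measurable

lemma nn_integral_Beta:
  fixes a b :: real
  assumes "a > 0" "b > 0"
  shows "(\<integral>\<^sup>+u. ennreal (indicator {0<..<1} u * u powr (a - 1) * (1 - u) powr (b - 1)) \<partial>lborel)
       = ennreal (Beta a b)"
proof (rule nn_integral_has_integral_lborel)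
  have "((\<lambda>u. u powr (a - 1) * (1 - u) powr (b - 1)) has_integral Beta a b) {0<..<1}"
    using has_integral_Beta_real[OF assms] by (simp add: has_integral_Icc_iff_Ioo)
  then have "((\<lambda>u. if u \<in> {0<..<1} then u powr (a - 1) * (1 - u) powr (b - 1) else 0) has_integral Beta a b) UNIV"
    by (simp only: has_integral_restrict_UNIV)
  moreover have "(\<lambda>u. if u \<in> {0<..<1} then u powr (a - 1) * (1 - u) powr (b - 1) else 0)
      = (\<lambda>u. indicator {0<..<1} u * u powr (a - 1) * (1 - u) powr (b - 1))"
    by (auto simp: indicator_def)
  ultimately show "((\<lambda>u. indicator {0<..<1} u * u powr (a - 1) * (1 - u) powr (b - 1)) has_integral Beta a b) UNIV"
    by simp
qed (auto simp: indicator_def)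

lemma prob_space_beta_measure:
  assumes "a > 0" "b > 0"
  shows "prob_space (beta_measure a b)"
proof (rule prob_spaceI)
  have B: "Beta a b > 0" using Beta_real_pos[OF assms] .
  have "emeasure (beta_measure a b) (space (beta_measure a b))
      = (\<integral>\<^sup>+x. ennreal (1 / Beta a b) * ennreal (indicator {0<..<1} x * x powr (a - 1) * (1 - x) powr (b - 1)) \<partial>lborel)"
    using B by (auto simp: beta_measure_def emeasure_density beta_density_def ennreal_mult'[symmetric]
                     intro!: nn_integral_cong)
  also have "\<dots> = 1"
    using B by (subst nn_integral_cmult) (simp_all add: nn_integral_Beta[OF assms] ennreal_mult'[symmetric])
  finally show "emeasure (beta_measure a b) (space (beta_measure a b)) = 1" .
qed

lemma nn_integral_shifted_Beta:
  fixes a b t :: real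
  assumes a: "a > 0" and b: "b > 0" and t: "0 \<le> t"
  shows "(\<integral>\<^sup>+x. ennreal (indicator {t<..<1} x * (x - t) powr (a - 1) * (1 - x) powr (b - 1)) \<partial>lborel)
       = ennreal (if t < 1 then (1 - t) powr (a + b - 1) * Beta a b else 0)"
proof (cases "t < 1")
  case False
  then show ?thesis by simp
next
  case True
  let ?f = "\<lambda>x. ennreal (indicator {t<..<1} x * (x - t) powr (a - 1) * (1 - x) powr (b - 1))"
  have c: "1 - t > 0" using True by simp
  have rescale: "?f (t + (1 - t) * u)
      = ennreal ((1 - t) powr (a + b - 2)) * ennreal (indicator {0<..<1} u * u powr (a - 1) * (1 - u) powr (b - 1))"
    for u
  proof -
    have "t < t + (1 - t) * u \<longleftrightarrow> 0 < u"
      using c by (simp add: zero_less_mult_iff)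
    moreover have "t + (1 - t) * u < 1 \<longleftrightarrow> (1 - t) * u < (1 - t) * 1"
      by (simp add: algebra_simps)
    ultimately have mem: "t + (1 - t) * u \<in> {t<..<1} \<longleftrightarrow> u \<in> {0<..<1}"
      using c by (simp only: mult_less_cancel_left_pos greaterThanLessThan_iff)
    have "((1 - t) * u) powr (a - 1) * ((1 - t) * (1 - u)) powr (b - 1)
        = (1 - t) powr (a + b - 2) * (u powr (a - 1) * (1 - u) powr (b - 1))" if "u \<in> {0<..<1}"
      using c that by (simp add: powr_mult powr_add[symmetric] mult_ac)
    then show ?thesis
      using mem by (auto simp: indicator_def algebra_simps ennreal_mult'[symmetric])
  qed
  have "(\<integral>\<^sup>+x. ?f x \<partial>lborel) = ennreal (1 - t) * (\<integral>\<^sup>+u. ?f (t + (1 - t) * u) \<partial>lborel)"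
    using nn_integral_real_affine[of ?f "1 - t" t] c by simp
  also have "\<dots> = ennreal (1 - t) * (ennreal ((1 - t) powr (a + b - 2)) * ennreal (Beta a b))"
    unfolding rescale by (subst nn_integral_cmult) (auto simp: nn_integral_Beta[OF a b])
  also have "\<dots> = ennreal ((1 - t) powr (a + b - 1) * Beta a b)"
    using c Beta_real_pos[OF a b] powr_mult_base[of "1 - t" "a + b - 2"]
    by (simp add: ennreal_mult'[symmetric] ennreal_mult''[symmetric] mult.assoc[symmetric])
  finally show ?thesis using True by simp
qed

definition beta1_survival :: "real \<Rightarrow> real \<Rightarrow> real" where
  "beta1_survival c t = (if t < 1 then (1 - max 0 t) powr c else 0)"

lemma emeasure_beta1_greaterThan:
  fixes c t :: real
  assumes c: "c > 0"
  shows "emeasure (beta_measure 1 c) {t<..} = ennreal (beta1_survival c t)"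
proof -
  define t' where "t' = max 0 t"
  have B: "Beta 1 c > 0" using Beta_real_pos[of 1 c] c by simp
  have "ennreal (beta_density 1 c x) * indicator {t<..} x
      = ennreal (1 / Beta 1 c) * ennreal (indicator {t'<..<1} x * (x - t') powr (1 - 1) * (1 - x) powr (c - 1))"
    for x
    using B by (cases "t' < x \<and> x < 1")
      (auto simp: t'_def beta_density_def indicator_def ennreal_mult'[symmetric])
  then have "emeasure (beta_measure 1 c) {t<..}
      = (\<integral>\<^sup>+x. ennreal (1 / Beta 1 c) * ennreal (indicator {t'<..<1} x * (x - t') powr (1 - 1) * (1 - x) powr (c - 1)) \<partial>lborel)"
    by (simp add: beta_measure_def emeasure_density)
  also have "\<dots> = ennreal (1 / Beta 1 c) * ennreal (if t' < 1 then (1 - t') powr (1 + c - 1) * Beta 1 c else 0)"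
    by (subst nn_integral_cmult, measurable, subst nn_integral_shifted_Beta) (use c in \<open>simp_all add: t'_def\<close>)
  also have "\<dots> = ennreal (beta1_survival c t)"
    using B by (auto simp: beta1_survival_def t'_def ennreal_mult'[symmetric])
  finally show ?thesis .
qed

lemma beta_measure_1_eqI:
  fixes Q :: "real measure" and c :: real
  assumes c: "c > 0" and Q: "prob_space Q" "sets Q = sets borel"
    and tail: "\<And>t. emeasure Q {t<..} = ennreal (beta1_survival c t)"
  shows "Q = beta_measure 1 c"
proof (rule cdf_unique)
  show rQ: "real_distribution Q"
    using Q by (simp add: real_distribution_def real_distribution_axioms_def)
  show rB: "real_distribution (beta_measure 1 c)"
    using prob_space_beta_measure[of 1 c] c by (simp add: real_distribution_def real_distribution_axioms_def)
  have cdf: "cdf N t = 1 - measure N {t<..}" if "real_distribution N" for N t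
  proof -
    interpret real_distribution N by fact
    have "{..t} = space N - {t<..}" by auto
    then show ?thesis using prob_compl[of "{t<..}"] by (simp add: cdf_def)
  qed
  show "cdf Q = cdf (beta_measure 1 c)"
    by (rule ext) (simp add: cdf[OF rQ] cdf[OF rB] measure_def tail emeasure_beta1_greaterThan[OF c])
qed

lemma beta_density_times_emeasure_beta1:
  fixes a1 a2 t x :: real
  assumes a1: "a1 > 0" and a2: "a2 > 0"
  shows "ennreal (beta_density (1 + a1) a2 x) * emeasure (beta_measure 1 a1) {y. t < x * y}
       = ennreal (1 / Beta (1 + a1) a2)
         * ennreal (indicator {max 0 t<..<1} x * (x - max 0 t) powr (1 + a1 - 1) * (1 - x) powr (a2 - 1))"
proof (cases "0 < x \<and> x < 1")
  case False
  then show ?thesis by (auto simp: beta_density_def indicator_def)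
next
  case True
  have B: "Beta (1 + a1) a2 > 0" using Beta_real_pos[of "1 + a1" a2] a1 a2 by simp
  have "{y. t < x * y} = {t / x<..}"
    using True by (auto simp: pos_divide_less_eq mult.commute)
  then have tail: "emeasure (beta_measure 1 a1) {y. t < x * y} = ennreal (beta1_survival a1 (t / x))"
    by (simp add: emeasure_beta1_greaterThan[OF a1])
  show ?thesis
  proof (cases "t < x")
    case False
    then show ?thesis using True by (simp add: tail beta1_survival_def le_divide_eq indicator_def)
  next
    case t: True
    have "x powr a1 * (1 - max 0 (t / x)) powr a1 = (x * (1 - max 0 (t / x))) powr a1"
      using True t by (simp add: powr_mult divide_less_eq)
    also have "x * (1 - max 0 (t / x)) = x - max 0 t"
      using True by (auto simp: field_simps max_def)
    finally have "beta_density (1 + a1) a2 x * (1 - max 0 (t / x)) powr a1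
        = 1 / Beta (1 + a1) a2 * ((x - max 0 t) powr a1 * (1 - x) powr (a2 - 1))"
      using True by (simp add: beta_density_def indicator_def field_simps)
    then show ?thesis
      using True t B
      by (simp add: tail beta1_survival_def divide_less_eq indicator_def
                    ennreal_mult'[symmetric] ennreal_mult''[symmetric])
  qed
qed

lemma nn_integral_beta_density_times_emeasure_beta1:
  fixes a1 a2 t :: real
  assumes a1: "a1 > 0" and a2: "a2 > 0"
  shows "(\<integral>\<^sup>+x. ennreal (beta_density (1 + a1) a2 x) * emeasure (beta_measure 1 a1) {y. t < x * y} \<partial>lborel)
       = ennreal (beta1_survival (a1 + a2) t)"
proof -
  have B: "Beta (1 + a1) a2 > 0" using Beta_real_pos[of "1 + a1" a2] a1 a2 by simp
  have "(\<integral>\<^sup>+x. ennreal (beta_density (1 + a1) a2 x) * emeasure (beta_measure 1 a1) {y. t < x * y} \<partial>lborel)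
      = ennreal (1 / Beta (1 + a1) a2)
        * ennreal (if max 0 t < 1 then (1 - max 0 t) powr (1 + a1 + a2 - 1) * Beta (1 + a1) a2 else 0)"
    using a1 a2
    by (simp only: beta_density_times_emeasure_beta1, subst nn_integral_cmult, measurable,
        subst nn_integral_shifted_Beta) simp_all
  also have "\<dots> = ennreal (beta1_survival (a1 + a2) t)"
    using B by (auto simp: beta1_survival_def ennreal_mult'[symmetric] add.commute)
  finally show ?thesis .
qed

lemma distr_mult_beta_measure:
  fixes a1 a2 :: real and N :: "'n measure" and f :: "'n \<Rightarrow> real"
  assumes a1: "a1 > 0" and a2: "a2 > 0" and N: "prob_space N"
    and f[measurable]: "f \<in> borel_measurable N" and law: "distr N borel f = beta_measure 1 a1"
  shows "distr (beta_measure (1 + a1) a2 \<Otimes>\<^sub>M N) borel (\<lambda>(x, y). x * f y) = beta_measure 1 (a1 + a2)"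
proof (rule beta_measure_1_eqI)
  interpret N: prob_space N by fact
  interpret B0: prob_space "beta_measure (1 + a1) a2"
    using prob_space_beta_measure[of "1 + a1" a2] a1 a2 by simp
  interpret pair_prob_space "beta_measure (1 + a1) a2" N ..
  show "prob_space (distr (beta_measure (1 + a1) a2 \<Otimes>\<^sub>M N) borel (\<lambda>(x, y). x * f y))"
    by (rule prob_space_distr) measurable
  fix t :: real
  let ?X = "{p \<in> space (beta_measure (1 + a1) a2 \<Otimes>\<^sub>M N). t < fst p * f (snd p)}"
  have X[measurable]: "?X \<in> sets (beta_measure (1 + a1) a2 \<Otimes>\<^sub>M N)"
    by measurable
  have slice: "emeasure N (Pair x -` ?X) = emeasure (beta_measure 1 a1) {y. t < x * y}" for x
  proof -
    have "Pair x -` ?X = f -` {y. t < x * y} \<inter> space N"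
      by (auto simp: space_pair_measure)
    then show ?thesis
      by (simp add: law[symmetric] emeasure_distr)
  qed
  have "(\<lambda>x. emeasure N (Pair x -` ?X)) \<in> borel_measurable lborel"
    using N.measurable_emeasure_Pair[OF X]
    by (simp add: measurable_cong_sets[OF _ refl, of "beta_measure (1 + a1) a2" lborel])
  then have [measurable]: "(\<lambda>x. emeasure (beta_measure 1 a1) {y. t < x * y}) \<in> borel_measurable lborel"
    by (simp only: slice)
  have "emeasure (distr (beta_measure (1 + a1) a2 \<Otimes>\<^sub>M N) borel (\<lambda>(x, y). x * f y)) {t<..}
      = emeasure (beta_measure (1 + a1) a2 \<Otimes>\<^sub>M N) ?X"
    by (subst emeasure_distr) (auto intro!: arg_cong2[where f=emeasure])
  also have "\<dots> = (\<integral>\<^sup>+x. emeasure N (Pair x -` ?X) \<partial>beta_measure (1 + a1) a2)"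
    by (rule N.emeasure_pair_measure_alt[OF X])
  also have "\<dots> = (\<integral>\<^sup>+x. emeasure (beta_measure 1 a1) {y. t < x * y} \<partial>beta_measure (1 + a1) a2)"
    by (simp only: slice)
  also have "\<dots> = (\<integral>\<^sup>+x. ennreal (beta_density (1 + a1) a2 x) * emeasure (beta_measure 1 a1) {y. t < x * y} \<partial>lborel)"
    unfolding beta_measure_def[of "1 + a1"] by (rule nn_integral_density) measurable
  also have "\<dots> = ennreal (beta1_survival (a1 + a2) t)"
    by (rule nn_integral_beta_density_times_emeasure_beta1[OF a1 a2])
  finally show "emeasure (distr (beta_measure (1 + a1) a2 \<Otimes>\<^sub>M N) borel (\<lambda>(x, y). x * f y)) {t<..}
      = ennreal (beta1_survival (a1 + a2) t)" .
qed (use a1 a2 in simp_all)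

lemma (in pair_prob_space) distr_pair_snd: "distr (M1 \<Otimes>\<^sub>M M2) M2 snd = M2"
proof (intro measure_eqI)
  fix A assume A: "A \<in> sets (distr (M1 \<Otimes>\<^sub>M M2) M2 snd)"
  then have "emeasure (distr (M1 \<Otimes>\<^sub>M M2) M2 snd) A = emeasure (M1 \<Otimes>\<^sub>M M2) (space M1 \<times> A)"
    by (auto simp: emeasure_distr space_pair_measure dest: sets.sets_into_space
             intro!: arg_cong2[where f=emeasure])
  with A show "emeasure (distr (M1 \<Otimes>\<^sub>M M2) M2 snd) A = emeasure M2 A"
    by (simp add: M2.emeasure_pair_measure_Times M1.emeasure_space_1)
qed simp

lemma distr_common_beta_factor:
  fixes a1 a2 :: real
  assumes a1: "a1 > 0" and a2: "a2 > 0"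
  defines "P \<equiv> distr (beta_measure (1 + a1) a2 \<Otimes>\<^sub>M (beta_measure 1 a1 \<Otimes>\<^sub>M beta_measure 1 a1)) borel
                 (\<lambda>(v0, v1, v2). (v0 * v1, v0 * v2))"
  shows "distr P borel fst = beta_measure 1 (a1 + a2)" and "distr P borel snd = beta_measure 1 (a1 + a2)"
proof -
  interpret B1: prob_space "beta_measure 1 a1" using prob_space_beta_measure[of 1 a1] a1 by simp
  interpret B11: pair_prob_space "beta_measure 1 a1" "beta_measure 1 a1" ..
  have "distr (beta_measure 1 a1 \<Otimes>\<^sub>M beta_measure 1 a1) borel fst = beta_measure 1 a1"
    by (subst B1.distr_pair_fst[symmetric]) (rule distr_cong, simp_all)
  from distr_mult_beta_measure[OF a1 a2 B11.P.prob_space_axioms _ this]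
  show "distr P borel fst = beta_measure 1 (a1 + a2)"
    unfolding P_def
    by (subst distr_distr) (auto simp: comp_def case_prod_beta case_prod_beta' borel_measurable_fst)
  have "distr (beta_measure 1 a1 \<Otimes>\<^sub>M beta_measure 1 a1) borel snd = beta_measure 1 a1"
    by (subst B11.distr_pair_snd[symmetric]) (rule distr_cong, simp_all)
  from distr_mult_beta_measure[OF a1 a2 B11.P.prob_space_axioms _ this]
  show "distr P borel snd = beta_measure 1 (a1 + a2)"
    unfolding P_def
    by (subst distr_distr) (auto simp: comp_def case_prod_beta case_prod_beta' borel_measurable_snd)
qed

lemma distr_nested_beta_factor:
  fixes a1 a2 :: real
  assumes a1: "a1 > 0" and a2: "a2 > 0"
  defines "P \<equiv> distr (beta_measure 1 a1 \<Otimes>\<^sub>M beta_measure (1 + a1) a2) borel (\<lambda>(v0, v1). (v0 * v1, v0))"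
  shows "distr P borel fst = beta_measure 1 (a1 + a2)" and "distr P borel snd = beta_measure 1 a1"
proof -
  interpret B0: prob_space "beta_measure (1 + a1) a2"
    using prob_space_beta_measure[of "1 + a1" a2] a1 a2 by simp
  interpret B1: prob_space "beta_measure 1 a1" using prob_space_beta_measure[of 1 a1] a1 by simp
  interpret pair_prob_space "beta_measure 1 a1" "beta_measure (1 + a1) a2" ..
  have "distr (beta_measure 1 a1) borel (\<lambda>y. y) = beta_measure 1 a1"
    by (subst distr_id[symmetric]) (rule distr_cong, simp_all)
  from distr_mult_beta_measure[OF a1 a2 B1.prob_space_axioms _ this]
  have "distr (beta_measure (1 + a1) a2 \<Otimes>\<^sub>M beta_measure 1 a1) borel (\<lambda>(x, y). x * y) = beta_measure 1 (a1 + a2)"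
    by simp
  moreover have "distr (beta_measure 1 a1 \<Otimes>\<^sub>M beta_measure (1 + a1) a2) borel (\<lambda>(x, y). x * y)
      = distr (beta_measure (1 + a1) a2 \<Otimes>\<^sub>M beta_measure 1 a1) borel (\<lambda>(x, y). x * y)"
    by (subst distr_pair_swap, subst distr_distr) (auto simp: comp_def case_prod_beta' mult.commute)
  moreover have "distr P borel fst = distr (beta_measure 1 a1 \<Otimes>\<^sub>M beta_measure (1 + a1) a2) borel (\<lambda>(x, y). x * y)"
    unfolding P_def by (subst distr_distr) (auto simp: comp_def case_prod_beta' borel_measurable_fst)
  ultimately show "distr P borel fst = beta_measure 1 (a1 + a2)"
    by simp
  show "distr P borel snd = beta_measure 1 a1"
    unfolding P_def
    by (subst distr_distr, simp_all add: borel_measurable_snd, subst B0.distr_pair_fst[symmetric])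
       (rule distr_cong, auto simp: case_prod_beta)
qed

section \<open>Stick-breaking random measures\<close>

lemma distr_distr_preimage:
  assumes X: "X \<in> measurable M K"
    and g: "\<And>A. A \<in> sets N \<Longrightarrow> g -` A \<inter> space K \<in> sets K"
  shows "distr M N (\<lambda>\<omega>. g (X \<omega>)) = distr (distr M K X) N g"
  unfolding distr_def
proof (simp, rule measure_of_eq)
  show "sets N \<subseteq> Pow (space N)" by (rule sets.space_closed)
next
  fix A assume "A \<in> sigma_sets (space N) (sets N)"
  then have A: "A \<in> sets N" by (simp add: sets.sigma_sets_eq)
  have "emeasure (measure_of (space K) (sets K) (\<lambda>B. emeasure M (X -` B \<inter> space M))) (g -` A \<inter> space K)
      = emeasure (distr M K X) (g -` A \<inter> space K)" by (simp add: distr_def)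
  also have "\<dots> = emeasure M (X -` (g -` A \<inter> space K) \<inter> space M)"
    using g[OF A] X by (rule emeasure_distr[rotated])
  also have "X -` (g -` A \<inter> space K) \<inter> space M = (\<lambda>\<omega>. g (X \<omega>)) -` A \<inter> space M"
    using measurable_space[OF X] by auto
  finally show "emeasure M ((\<lambda>\<omega>. g (X \<omega>)) -` A \<inter> space M) =
     emeasure (measure_of (space K) (sets K) (\<lambda>B. emeasure M (X -` B \<inter> space M))) (g -` A \<inter> space K)"
    by simp
qed

lemma space_discrete_rm[simp]: "space (discrete_rm w \<xi>) = UNIV"
  by (simp add: discrete_rm_def space_measure_of_conv)

lemma sets_discrete_rm[simp]: "sets (discrete_rm w \<xi>) = sets borel"
  unfolding discrete_rm_def by (subst sets_measure_of) (auto simp: sets.sigma_sets_eq[of borel, simplified])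

lemma emeasure_discrete_rm:
  fixes \<xi> :: "nat \<Rightarrow> 'a::topological_space"
  assumes A: "A \<in> sets borel"
  shows "emeasure (discrete_rm w \<xi>) A = (\<Sum>k. ennreal (w k) * indicator A (\<xi> k))"
  unfolding discrete_rm_def
proof (rule emeasure_measure_of_sigma[OF _ _ _ A])
  show "sigma_algebra UNIV (sets borel)"
    using sets.sigma_algebra_axioms[of borel] by simp
  show "positive (sets borel) (\<lambda>A. \<Sum>k. ennreal (w k) * indicator A (\<xi> k))"
    by (simp add: positive_def)
  show "countably_additive (sets borel) (\<lambda>A. \<Sum>k. ennreal (w k) * indicator A (\<xi> k))"
  proof (rule countably_additiveI)
    fix A :: "nat \<Rightarrow> 'a set" assume "range A \<subseteq> sets borel" "disjoint_family A"
    have "(\<Sum>n. \<Sum>k. ennreal (w k) * indicator (A n) (\<xi> k))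
        = (\<Sum>n. \<integral>\<^sup>+k. ennreal (w k) * indicator (A n) (\<xi> k) \<partial>count_space UNIV)"
      by (simp add: nn_integral_count_space_nat)
    also have "\<dots> = (\<integral>\<^sup>+k. (\<Sum>n. ennreal (w k) * indicator (A n) (\<xi> k)) \<partial>count_space UNIV)"
      by (rule nn_integral_suminf[symmetric]) simp
    also have "\<dots> = (\<Sum>k. ennreal (w k) * indicator (\<Union>n. A n) (\<xi> k))"
      using suminf_indicator[OF \<open>disjoint_family A\<close>]
      by (simp add: ennreal_suminf_cmult nn_integral_count_space_nat)
    finally show "(\<Sum>n. \<Sum>k. ennreal (w k) * indicator (A n) (\<xi> k)) =
       (\<Sum>k. ennreal (w k) * indicator (\<Union>n. A n) (\<xi> k))" .
  qed
qed

lemma subprob_space_discrete_rm: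
  fixes \<xi> :: "nat \<Rightarrow> 'a::topological_space"
  assumes "(\<Sum>k. ennreal (w k)) \<le> 1"
  shows "subprob_space (discrete_rm w \<xi>)"
  by (rule subprob_spaceI) (use assms in \<open>simp_all add: emeasure_discrete_rm\<close>)

lemma measurable_discrete_rm:
  fixes \<xi> :: "'k \<Rightarrow> nat \<Rightarrow> 'a::topological_space"
  assumes [measurable]: "\<And>k. (\<lambda>x. w x k) \<in> borel_measurable K" "\<And>k. (\<lambda>x. \<xi> x k) \<in> borel_measurable K"
    and total: "\<And>x. x \<in> space K \<Longrightarrow> (\<Sum>k. ennreal (w x k)) \<le> 1"
  shows "(\<lambda>x. discrete_rm (w x) (\<xi> x)) \<in> measurable K (subprob_algebra borel)"
proof (rule measurable_subprob_algebra)
  fix B :: "'a set" assume [measurable]: "B \<in> sets borel"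
  have "(\<lambda>x. \<Sum>k. ennreal (w x k) * indicator B (\<xi> x k)) \<in> borel_measurable K"
    by measurable
  then show "(\<lambda>x. emeasure (discrete_rm (w x) (\<xi> x)) B) \<in> borel_measurable K"
    by (simp add: emeasure_discrete_rm)
qed (simp_all add: subprob_space_discrete_rm total)

definition stick_breaking_rm :: "(nat \<Rightarrow> real) \<times> (nat \<Rightarrow> 'a::topological_space) \<Rightarrow> 'a measure" where
  "stick_breaking_rm = (\<lambda>(s, \<xi>). discrete_rm (stick_weights s) \<xi>)"

text \<open>For arbitrary real sticks the weights need not sum to at most 1, so
  \<open>stick_breaking_rm\<close> is not measurable into the Giry space; its preimages still are.\<close>
lemma vimage_stick_breaking_rm_sets:
  defines "K \<equiv> (\<Pi>\<^sub>M k\<in>(UNIV::nat set). (borel::real measure)) \<Otimes>\<^sub>M (\<Pi>\<^sub>M k\<in>(UNIV::nat set). (borel::'a::topological_space measure))"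
  assumes A: "A \<in> sets (subprob_algebra borel)"
  shows "stick_breaking_rm -` A \<inter> space K \<in> sets K"
proof -
  have [measurable]: "(\<lambda>x. stick_weights (fst x) k) \<in> borel_measurable K" "(\<lambda>x. snd x k) \<in> borel_measurable K" for k
    unfolding stick_weights_def K_def by measurable
  define G where "G = {x\<in>space K. (\<Sum>k. ennreal (stick_weights (fst x) k)) \<le> 1}"
  have G: "G \<in> sets K" unfolding G_def by measurable
  define h where "h x = discrete_rm (\<lambda>k. if x \<in> G then stick_weights (fst x) k else 0) (snd x)" for x
  have "h \<in> measurable K (subprob_algebra borel)"
  proof (unfold h_def, rule measurable_discrete_rm)
    show "(\<Sum>k. ennreal (if x \<in> G then stick_weights (fst x) k else 0)) \<le> 1" for x
    proof (cases "x \<in> G")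
      case True
      then show ?thesis by (simp add: G_def)
    qed simp
  qed (use G in simp_all)
  moreover have member: "stick_breaking_rm x \<in> A \<longleftrightarrow> x \<in> G \<and> h x \<in> A" if x: "x \<in> space K" for x
  proof -
    have "x \<in> G" if "stick_breaking_rm x \<in> A"
    proof -
      have "subprob_space (stick_breaking_rm x)"
        using sets.sets_into_space[OF A] that by (auto simp: space_subprob_algebra)
      then have "emeasure (stick_breaking_rm x) (space (stick_breaking_rm x)) \<le> 1"
        by (rule subprob_space.emeasure_space_le_1)
      then show ?thesis
        using x by (simp add: G_def stick_breaking_rm_def emeasure_discrete_rm split: prod.splits)
    qed
    then show ?thesis by (auto simp: h_def stick_breaking_rm_def split: prod.splits)
  qed
  then have "stick_breaking_rm -` A \<inter> space K = h -` A \<inter> space K \<inter> G"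
    by blast
  ultimately show ?thesis
    using A G by (simp add: sets.Int measurable_sets)
qed

lemma vimage_comp_in_vimage_algebra:
  assumes "g \<in> measurable N L" "X \<in> measurable M N" "A \<in> sets L"
  shows "(\<lambda>\<omega>. g (X \<omega>)) -` A \<inter> space M \<in> sets (vimage_algebra (space M) X N)"
proof -
  have "X -` (g -` A \<inter> space N) \<inter> space M \<in> sets (vimage_algebra (space M) X N)"
    using assms by (intro in_vimage_algebra measurable_sets)
  also have "X -` (g -` A \<inter> space N) \<inter> space M = (\<lambda>\<omega>. g (X \<omega>)) -` A \<inter> space M"
    using measurable_space[OF assms(2)] by auto
  finally show ?thesis .
qed

lemma (in prob_space) indep_set_commute: "indep_set A B \<Longrightarrow> indep_set B A"
  by (simp add: indep_sets2_eq) (metis Int_commute mult.commute)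

lemma (in prob_space) distr_Pair_eq_pair_measure:
  assumes X: "random_variable S X" and Y: "random_variable T Y"
    and indep: "indep_set \<A> \<B>"
    and X_in: "\<And>A. A \<in> sets S \<Longrightarrow> X -` A \<inter> space M \<in> \<A>"
    and Y_in: "\<And>B. B \<in> sets T \<Longrightarrow> Y -` B \<inter> space M \<in> \<B>"
  shows "distr M (S \<Otimes>\<^sub>M T) (\<lambda>\<omega>. (X \<omega>, Y \<omega>)) = distr M S X \<Otimes>\<^sub>M distr M T Y"
proof (rule pair_measure_eqI[symmetric])
  show "sigma_finite_measure (distr M S X)" "sigma_finite_measure (distr M T Y)"
    using X Y by (auto intro: prob_space_imp_sigma_finite prob_space_distr)
  fix A B assume "A \<in> sets (distr M S X)" "B \<in> sets (distr M T Y)"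
  then have A: "A \<in> sets S" and B: "B \<in> sets T" by auto
  have "(\<lambda>\<omega>. (X \<omega>, Y \<omega>)) -` (A \<times> B) \<inter> space M = (X -` A \<inter> space M) \<inter> (Y -` B \<inter> space M)"
    by auto
  then have "emeasure (distr M (S \<Otimes>\<^sub>M T) (\<lambda>\<omega>. (X \<omega>, Y \<omega>))) (A \<times> B)
      = prob ((X -` A \<inter> space M) \<inter> (Y -` B \<inter> space M))"
    using A B X Y by (simp add: emeasure_distr emeasure_eq_measure)
  also have "\<dots> = prob (X -` A \<inter> space M) * prob (Y -` B \<inter> space M)"
    using indep_setD[OF indep X_in[OF A] Y_in[OF B]] by simp
  finally show "emeasure (distr M S X) A * emeasure (distr M T Y) B
      = emeasure (distr M (S \<Otimes>\<^sub>M T) (\<lambda>\<omega>. (X \<omega>, Y \<omega>))) (A \<times> B)"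
    using A B X Y by (simp add: emeasure_distr emeasure_eq_measure ennreal_mult')
qed simp

lemma (in prob_space) distr_PiM_iid:
  fixes X :: "'i \<Rightarrow> 'a \<Rightarrow> 'b::topological_space" and g :: "'b \<Rightarrow> 'c::topological_space"
  assumes "indep_vars (\<lambda>_. borel) X UNIV" "\<And>i. random_variable borel (X i)"
    and "\<And>i. distr M borel (X i) = L" and g[measurable]: "g \<in> borel_measurable borel"
  shows "distr M (\<Pi>\<^sub>M i\<in>UNIV. borel) (\<lambda>\<omega> i. g (X i \<omega>)) = (\<Pi>\<^sub>M i\<in>UNIV. distr L borel g)"
proof -
  have "distr M borel (\<lambda>\<omega>. g (X i \<omega>)) = distr L borel g" for i
    unfolding assms(3)[of i, symmetric] by (subst distr_distr) (simp_all add: comp_def assms(2))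
  moreover have "indep_vars (\<lambda>_. borel) (\<lambda>i \<omega>. g (X i \<omega>)) UNIV"
    using assms(1) by (rule indep_vars_compose2) measurable
  ultimately show ?thesis
    using assms(2) indep_vars_iff_distr_eq_PiM[where I=UNIV and M'="\<lambda>_. borel" and X="\<lambda>i \<omega>. g (X i \<omega>)"]
    by (simp add: restrict_UNIV)
qed

lemma (in prob_space) distr_stick_breaking_eq_DP:
  fixes \<Sigma> :: "nat \<Rightarrow> 'a \<Rightarrow> 'd::topological_space" and \<Phi> :: "nat \<Rightarrow> 'a \<Rightarrow> 'c::topological_space"
    and f :: "'d \<Rightarrow> real" and h :: "'c \<Rightarrow> 'b::topological_space"
  assumes \<Sigma>_meas[measurable]: "\<And>k. \<Sigma> k \<in> borel_measurable M"
    and \<Phi>_meas[measurable]: "\<And>k. \<Phi> k \<in> borel_measurable M"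
    and f_meas[measurable]: "f \<in> borel_measurable borel" and h_meas[measurable]: "h \<in> borel_measurable borel"
    and \<Sigma>_indep: "indep_vars (\<lambda>_. borel) \<Sigma> UNIV" and \<Phi>_indep: "indep_vars (\<lambda>_. borel) \<Phi> UNIV"
    and \<Sigma>_law: "\<And>k. distr M borel (\<Sigma> k) = L" and f_law: "distr L borel f = beta_measure 1 c"
    and \<Phi>_law: "\<And>k. distr M borel (\<Phi> k) = G"
    and indep:
      "indep_set
         (sets (vimage_algebra (space M) (\<lambda>\<omega> k. \<Phi> k \<omega>) (\<Pi>\<^sub>M k\<in>(UNIV::nat set). borel)))
         (sets (vimage_algebra (space M) (\<lambda>\<omega> k. \<Sigma> k \<omega>) (\<Pi>\<^sub>M k\<in>(UNIV::nat set). borel)))"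
  shows "distr M (subprob_algebra borel) (\<lambda>\<omega>. discrete_rm (stick_weights (\<lambda>k. f (\<Sigma> k \<omega>))) (\<lambda>k. h (\<Phi> k \<omega>)))
       = DP c (distr G borel h)"
proof -
  let ?S = "\<Pi>\<^sub>M k\<in>(UNIV::nat set). (borel::real measure)"
  let ?T = "\<Pi>\<^sub>M k\<in>(UNIV::nat set). (borel::'b measure)"
  let ?Y = "\<lambda>\<omega> k. f (\<Sigma> k \<omega>)" and ?Z = "\<lambda>\<omega> k. h (\<Phi> k \<omega>)"
  have Y: "distr M ?S ?Y = (\<Pi>\<^sub>M k\<in>UNIV. beta_measure 1 c)"
    using distr_PiM_iid[OF \<Sigma>_indep \<Sigma>_meas \<Sigma>_law f_meas] by (simp add: f_law)
  have Z: "distr M ?T ?Z = (\<Pi>\<^sub>M k\<in>UNIV. distr G borel h)"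
    using distr_PiM_iid[OF \<Phi>_indep \<Phi>_meas \<Phi>_law h_meas] .
  have [measurable]: "(\<lambda>\<omega> k. \<Sigma> k \<omega>) \<in> measurable M (\<Pi>\<^sub>M k\<in>UNIV. borel)"
    "(\<lambda>\<omega> k. \<Phi> k \<omega>) \<in> measurable M (\<Pi>\<^sub>M k\<in>UNIV. borel)"
    "(\<lambda>s k. f (s k)) \<in> measurable (\<Pi>\<^sub>M k\<in>UNIV. borel) ?S"
    "(\<lambda>\<xi> k. h (\<xi> k)) \<in> measurable (\<Pi>\<^sub>M k\<in>UNIV. borel) ?T"
    by (auto intro!: measurable_PiM_single')
  have joint: "distr M (?S \<Otimes>\<^sub>M ?T) (\<lambda>\<omega>. (?Y \<omega>, ?Z \<omega>)) = distr M ?S ?Y \<Otimes>\<^sub>M distr M ?T ?Z"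
  proof (rule distr_Pair_eq_pair_measure[OF _ _ indep_set_commute[OF indep]])
    show "?Y -` A \<inter> space M \<in> sets (vimage_algebra (space M) (\<lambda>\<omega> k. \<Sigma> k \<omega>) (\<Pi>\<^sub>M k\<in>UNIV. borel))"
      if "A \<in> sets ?S" for A
      using that by (intro vimage_comp_in_vimage_algebra[where g="\<lambda>s k. f (s k)"]) measurable
    show "?Z -` B \<inter> space M \<in> sets (vimage_algebra (space M) (\<lambda>\<omega> k. \<Phi> k \<omega>) (\<Pi>\<^sub>M k\<in>UNIV. borel))"
      if "B \<in> sets ?T" for B
      using that by (intro vimage_comp_in_vimage_algebra[where g="\<lambda>\<xi> k. h (\<xi> k)"]) measurable
  qed measurable
  have "distr M (subprob_algebra borel) (\<lambda>\<omega>. stick_breaking_rm (?Y \<omega>, ?Z \<omega>))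
      = distr (distr M (?S \<Otimes>\<^sub>M ?T) (\<lambda>\<omega>. (?Y \<omega>, ?Z \<omega>))) (subprob_algebra borel) stick_breaking_rm"
    by (rule distr_distr_preimage[OF _ vimage_stick_breaking_rm_sets]) measurable
  then show ?thesis
    by (simp add: joint Y Z DP_def stick_breaking_rm_def)
qed

theorem proposition3:
  fixes M :: "'w measure"
    and G0 :: "('a::polish_space \<times> 'a) measure"
    and \<phi> :: "nat \<Rightarrow> 'w \<Rightarrow> 'a \<times> 'a"
    and S :: "nat \<Rightarrow> 'w \<Rightarrow> real \<times> real"
    and \<alpha>1 \<alpha>2 :: real
  defines "G01 \<equiv> distr G0 borel fst"
    and "G02 \<equiv> distr G0 borel snd"
    and "G1 \<equiv> (\<lambda>\<omega>. discrete_rm (stick_weights (\<lambda>k. fst (S k \<omega>))) (\<lambda>k. fst (\<phi> k \<omega>)))"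
    and "G2 \<equiv> (\<lambda>\<omega>. discrete_rm (stick_weights (\<lambda>k. snd (S k \<omega>))) (\<lambda>k. snd (\<phi> k \<omega>)))"
  assumes M: "prob_space M"
    and G0: "prob_space G0" "sets G0 = sets borel"
    and alpha: "\<alpha>1 > 0" "\<alpha>2 > 0"
    and phi_meas: "\<And>k. \<phi> k \<in> borel_measurable M"
    and S_meas: "\<And>k. S k \<in> borel_measurable M"
    and phi_law: "\<And>k. distr M borel (\<phi> k) = G0"
    and phi_indep: "prob_space.indep_vars M (\<lambda>_. borel) \<phi> UNIV"
    and S_ident: "\<And>k. distr M borel (S k) = distr M borel (S 0)"
    and S_indep: "prob_space.indep_vars M (\<lambda>_. borel) S UNIV"
    and indep_phi_S:
      "prob_space.indep_set M
         (sets (vimage_algebra (space M) (\<lambda>\<omega> k. \<phi> k \<omega>)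
                  (\<Pi>\<^sub>M k\<in>(UNIV::nat set). (borel :: ('a \<times> 'a) measure))))
         (sets (vimage_algebra (space M) (\<lambda>\<omega> k. S k \<omega>)
                  (\<Pi>\<^sub>M k\<in>(UNIV::nat set). (borel :: (real \<times> real) measure))))"
  shows
    "(distr M borel (S 0) =
        distr (beta_measure (1 + \<alpha>1) \<alpha>2 \<Otimes>\<^sub>M (beta_measure 1 \<alpha>1 \<Otimes>\<^sub>M beta_measure 1 \<alpha>1)) borel
              (\<lambda>(v0, v1, v2). (v0 * v1, v0 * v2))
      \<longrightarrow> distr M (subprob_algebra borel) G1 = DP (\<alpha>1 + \<alpha>2) G01
        \<and> distr M (subprob_algebra borel) G2 = DP (\<alpha>1 + \<alpha>2) G02)
   \<and> (distr M borel (S 0) =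
        distr (beta_measure 1 \<alpha>1 \<Otimes>\<^sub>M beta_measure (1 + \<alpha>1) \<alpha>2) borel
              (\<lambda>(v0, v1). (v0 * v1, v0))
      \<longrightarrow> distr M (subprob_algebra borel) G1 = DP (\<alpha>1 + \<alpha>2) G01
        \<and> distr M (subprob_algebra borel) G2 = DP \<alpha>1 G02)"
proof -
  interpret prob_space M by (rule M)
  have marginal:
    "distr M (subprob_algebra borel) (\<lambda>\<omega>. discrete_rm (stick_weights (\<lambda>k. p (S k \<omega>))) (\<lambda>k. q (\<phi> k \<omega>)))
       = DP c (distr G0 borel q)"
    if "distr (distr M borel (S 0)) borel p = beta_measure 1 c"
      and "p \<in> borel_measurable borel" and "q \<in> borel_measurable borel"
    for c p and q :: "'a \<times> 'a \<Rightarrow> 'a"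
    using distr_stick_breaking_eq_DP[OF S_meas phi_meas that(2,3) S_indep phi_indep
        S_ident that(1) phi_law indep_phi_S] .
  have G1_law: "distr M (subprob_algebra borel) G1 = DP c G01"
    if "distr (distr M borel (S 0)) borel fst = beta_measure 1 c" for c
    unfolding G1_def G01_def by (rule marginal[OF that]) measurable
  have G2_law: "distr M (subprob_algebra borel) G2 = DP c G02"
    if "distr (distr M borel (S 0)) borel snd = beta_measure 1 c" for c
    unfolding G2_def G02_def by (rule marginal[OF that]) measurable
  show ?thesis
    using distr_common_beta_factor[OF alpha] distr_nested_beta_factor[OF alpha]
    by (simp add: G1_law G2_law)
qed

end
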